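(* Let $\mathfrak{g}'\to\mathfrak{g}$ be a nontrivial deformation of finite-dimensional real Lie algebras. If the polynomial $P_T(\mathfrak{g}')-P_T(\mathfrak{g})$ has a negative coefficient, then the deformation is not of plateau type.
   Context: For a finite-dimensional real Lie algebra $\mathfrak{h}$, $b_i(\mathfrak{h})=\dim H^i(\mathfrak{h},\mathbb{R})$ (cohomology with trivial coefficients) and the Poincaré polynomial is $P_T(\mathfrak{h})=1+\sum_{i=1}^{\dim\mathfrak{h}}b_i(\mathfrak{h})T^i$. A deformation $\mathfrak{g}'\to\mathfrak{g}$ is a family $\mathfrak{g}_t$, $t\in[0,1]$, of Lie algebra structures on a fixed vector space, depending continuously on $t$, with $\mathfrak{g}_0=\mathfrak{g}'$ and $\mathfrak{g}_1\cong\mathfrak{g}$; it is nontrivial if $\mathfrak{g}\not\cong\mathfrak{g}'$. It is of plateau type if $\mathfrak{g}_0\not\cong\mathfrak{g}_1$ and $\mathfrak{g}_t\cong\mathfrak{g}_1$ for all $t\in(0,1]$. *)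

theory Defs
  imports "HOL-Analysis.Analysis" "HOL-Computational_Algebra.Polynomial" "HOL-Library.Function_Algebras"
begin

text \<open>A Lie algebra structure on the fixed real vector space with basis indexed by the
  finite type 'n, given by structure constants: [e_i, e_j] = sum_k c i j k e_k.\<close>

type_synonym 'n lie_str = "'n \<Rightarrow> 'n \<Rightarrow> 'n \<Rightarrow> real"

definition is_lie :: "'n::finite lie_str \<Rightarrow> bool" where
  "is_lie c \<longleftrightarrow>
     (\<forall>i k. c i i k = 0) \<and>
     (\<forall>i j k. c i j k = - c j i k) \<and>
     (\<forall>i j k m. (\<Sum>l\<in>UNIV. c i j l * c l k m + c j k l * c l i m + c k i l * c l j m) = 0)"

text \<open>Isomorphism: an invertible linear map A (matrix A m i = m-th coordinate of A e_i)
  with A [x,y] = [A x, A y]'.\<close>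
definition lie_iso :: "'n::finite lie_str \<Rightarrow> 'n lie_str \<Rightarrow> bool" where
  "lie_iso c c' \<longleftrightarrow>
     (\<exists>A B :: 'n \<Rightarrow> 'n \<Rightarrow> real.
        (\<forall>i j. (\<Sum>k\<in>UNIV. A i k * B k j) = (if i = j then 1 else 0)) \<and>
        (\<forall>i j. (\<Sum>k\<in>UNIV. B i k * A k j) = (if i = j then 1 else 0)) \<and>
        (\<forall>i j m. (\<Sum>k\<in>UNIV. c i j k * A m k) =
                 (\<Sum>k\<in>UNIV. \<Sum>l\<in>UNIV. A k i * A l j * c' k l m)))"

text \<open>Chevalley--Eilenberg cochains with trivial coefficients: alternating p-forms,
  represented by their values on tuples of basis vectors.\<close>
definition cochains :: "nat \<Rightarrow> ('n list \<Rightarrow> real) set" where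
  "cochains p = {\<omega>. (\<forall>xs. length xs \<noteq> p \<longrightarrow> \<omega> xs = 0) \<and>
      (\<forall>xs i j. length xs = p \<and> i < j \<and> j < p \<longrightarrow>
                 \<omega> (xs[i := xs ! j, j := xs ! i]) = - \<omega> xs)}"

definition drop_two :: "'a list \<Rightarrow> nat \<Rightarrow> nat \<Rightarrow> 'a list" where
  "drop_two xs i j = [xs ! l. l \<leftarrow> [0..<length xs], l \<noteq> i \<and> l \<noteq> j]"

definition ce_diff :: "'n::finite lie_str \<Rightarrow> ('n list \<Rightarrow> real) \<Rightarrow> ('n list \<Rightarrow> real)" where
  "ce_diff c \<omega> xs = (\<Sum>j<length xs. \<Sum>i<j. (-1) ^ (i + j) *
       (\<Sum>k\<in>UNIV. c (xs ! i) (xs ! j) k * \<omega> (k # drop_two xs i j)))"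

definition cocycles :: "'n::finite lie_str \<Rightarrow> nat \<Rightarrow> ('n list \<Rightarrow> real) set" where
  "cocycles c p = {\<omega> \<in> cochains p. ce_diff c \<omega> = (\<lambda>_. 0)}"

definition coboundaries :: "'n::finite lie_str \<Rightarrow> nat \<Rightarrow> ('n list \<Rightarrow> real) set" where
  "coboundaries c p = (if p = 0 then {\<lambda>_. 0} else ce_diff c ` cochains (p - 1))"

abbreviation fdim :: "('n list \<Rightarrow> real) set \<Rightarrow> nat" where
  "fdim \<equiv> vector_space.dim (\<lambda>(r::real) (f::'n list \<Rightarrow> real) x. r * f x)"

definition betti :: "'n::finite lie_str \<Rightarrow> nat \<Rightarrow> nat" where
  "betti c p = fdim (cocycles c p) - fdim (coboundaries c p)"

definition poincare_poly :: "'n::finite lie_str \<Rightarrow> real poly" where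
  "poincare_poly c = 1 + (\<Sum>i\<in>{1..CARD('n)}. monom (real (betti c i)) i)"

text \<open>A deformation g' -> g: a continuous family g_t, t in [0,1], of Lie structures
  on the fixed space, g_0 = g' and g_1 (isomorphic to g).\<close>
definition is_deformation :: "(real \<Rightarrow> 'n::finite lie_str) \<Rightarrow> bool" where
  "is_deformation c \<longleftrightarrow> (\<forall>t\<in>{0..1}. is_lie (c t)) \<and>
     (\<forall>i j k. continuous_on {0..1} (\<lambda>t. c t i j k))"

definition plateau_type :: "(real \<Rightarrow> 'n::finite lie_str) \<Rightarrow> bool" where
  "plateau_type c \<longleftrightarrow> \<not> lie_iso (c 0) (c 1) \<and> (\<forall>t\<in>{0<..1}. lie_iso (c t) (c 1))"

end

(* Betti numbers are isomorphism invariants, and for p >= 1 rank-nullity gives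
   b_p = dim C^p - rank d_p - rank d_(p-1).  The rank of a continuously varying linear map can
   only jump up nearby, because linear independence of finitely many vectors persists under
   small perturbations; hence b_p is upper semicontinuous along a deformation.  In a plateau
   deformation g_t is isomorphic to g for all small t > 0, so b_p(g) = b_p(g_t) <= b_p(g'), and
   P_T(g') - P_T(g) has no negative coefficient. *)

theory Submission
  imports Defs
begin

abbreviation fun_scale :: "real \<Rightarrow> ('a \<Rightarrow> real) \<Rightarrow> 'a \<Rightarrow> real" where
  "fun_scale \<equiv> \<lambda>r f x. r * f x"

interpretation fun_space: vector_space fun_scale
  by unfold_locales (auto simp: fun_eq_iff algebra_simps)

lemma sum_fun_apply: "sum f A x = (\<Sum>i\<in>A. f i x)"
  by (induction A rule: infinite_finite_induct) auto

section \<open>Dimension counting\<close>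

context vector_space begin

lemma span_Int_span_complement:
  assumes B: "independent B" "finite B" and KB: "K \<subseteq> B"
  shows "span K \<inter> span (B - K) = {0}"
proof -
  have "z = 0" if zK: "z \<in> span K" and zE: "z \<in> span (B - K)" for z
  proof -
    have fK: "finite K" using B(2) KB finite_subset by blast
    obtain u where u: "z = (\<Sum>v\<in>K. scale (u v) v)" using zK span_finite[OF fK] by auto
    obtain w where w: "z = (\<Sum>v\<in>B - K. scale (w v) v)" using zE span_finite[of "B - K"] B(2) by auto
    define a where "a v = (if v \<in> K then u v else - w v)" for v
    have "(\<Sum>v\<in>B. scale (a v) v) = (\<Sum>v\<in>K. scale (a v) v) + (\<Sum>v\<in>B - K. scale (a v) v)"
      using sum.subset_diff[OF KB B(2)] by (simp add: add.commute)
    also have "\<dots> = z + (\<Sum>v\<in>B - K. - (scale (w v) v))"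
      unfolding u a_def by (intro arg_cong2[where f = "(+)"] sum.cong) auto
    also have "\<dots> = 0" by (simp add: w sum_negf)
    finally have "\<forall>v\<in>B. a v = 0" using B dependent_finite[OF B(2)] by blast
    then have "\<forall>v\<in>K. u v = 0" using KB unfolding a_def by (metis subsetD)
    then show ?thesis unfolding u by simp
  qed
  then show ?thesis using span_zero by blast
qed

text \<open>The ambient space (functions on all lists) is infinite-dimensional; only C is assumed
  to be finitely spanned.\<close>
lemma dim_kernel_add_dim_image:
  assumes C: "subspace C" "C \<subseteq> span F" "finite F" and D: "module_hom scale scale D"
  shows "dim {x\<in>C. D x = 0} + dim (D ` C) = dim C"
proof -
  interpret D: module_hom scale scale D by fact
  let ?Z = "{x\<in>C. D x = 0}"
  obtain K where K: "K \<subseteq> ?Z" "independent K" "?Z \<subseteq> span K" "card K = dim ?Z"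
    by (rule basis_exists)
  obtain B where B: "K \<subseteq> B" "B \<subseteq> C" "independent B" "C \<subseteq> span B"
    using maximal_independent_subset_extend[of K C] K by auto
  have fB: "finite B" using independent_span_bound[OF C(3) B(3)] B(2) C(2) by blast
  define E where "E = B - K"
  have fE: "finite E" "finite K" using fB B(1) finite_subset E_def by auto
  have card_B: "card B = card K + card E"
    using card_Un_disjoint[OF fE(2) fE(1)] B(1) E_def by (metis Diff_disjoint Un_Diff_cancel sup.absorb2)
  have DK0: "\<And>k. k \<in> K \<Longrightarrow> D k = 0" using K(1) by auto
  have EC: "span E \<subseteq> C" using span_minimal[of E C] B(2) C(1) E_def by auto
  have inj_E: "inj_on D (span E)"
    unfolding D.inj_on_iff_eq_0[OF subspace_span]
  proof (intro ballI impI)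
    fix x assume "x \<in> span E" "D x = 0"
    then have "x \<in> span K \<inter> span (B - K)" using EC K(3) E_def by auto
    then show "x = 0" using span_Int_span_complement[OF B(3) fB B(1)] by blast
  qed
  have ind_DE: "independent (D ` E)"
    using D.independent_injective_image[OF _ inj_E] independent_mono[OF B(3)] E_def by blast
  have card_DE: "card (D ` E) = card E"
    using card_image inj_on_subset[OF inj_E span_superset] by blast
  have "D ` C \<subseteq> span (D ` E)"
  proof
    fix y assume "y \<in> D ` C"
    then obtain x where x: "x \<in> C" "y = D x" by auto
    have "x \<in> span (K \<union> E)" using x B(4) B(1) E_def by (metis Un_Diff_cancel sup.absorb2 subsetD)
    then obtain a b where ab: "x = a + b" "a \<in> span K" "b \<in> span E" using span_Un by blast
    have "D a = 0" using D.eq_0_on_span DK0 ab(2) by blast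
    then have "y = D b" using x ab D.add by simp
    then show "y \<in> span (D ` E)" using D.span_image ab(3) by blast
  qed
  moreover have "D ` E \<subseteq> D ` C" using B(2) E_def by auto
  ultimately have "dim (D ` C) = card E" using dim_unique[OF _ _ ind_DE card_DE] by blast
  moreover have "card B = dim C" using basis_card_eq_dim B by blast
  ultimately show ?thesis using card_B K(4) by simp
qed

lemma dim_image_eq:
  assumes f: "module_hom scale scale f" and inj: "inj_on f (span S)"
  shows "dim (f ` S) = dim S"
proof -
  interpret f: module_hom scale scale f by fact
  obtain B where B: "B \<subseteq> S" "independent B" "S \<subseteq> span B" "card B = dim S"
    by (rule basis_exists)
  have inj_B: "inj_on f (span B)" using inj_on_subset[OF inj span_mono[OF B(1)]] .
  have "card (f ` B) = dim (f ` S)"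
  proof (rule basis_card_eq_dim)
    show "f ` B \<subseteq> f ` S" using B(1) by (rule image_mono)
    show "f ` S \<subseteq> span (f ` B)" using f.spans_image[OF B(3)] .
    show "independent (f ` B)" using f.independent_injective_image[OF B(2) inj_B] .
  qed
  moreover have "card (f ` B) = card B"
    using card_image[OF inj_on_subset[OF inj_B span_superset]] .
  ultimately show ?thesis using B(4) by simp
qed

lemma card_le_dim_finitely_spanned:
  assumes "independent G" "G \<subseteq> V" "V \<subseteq> span F" "finite F"
  shows "card G \<le> dim V"
proof -
  obtain K where K: "K \<subseteq> V" "independent K" "V \<subseteq> span K" "card K = dim V"
    by (rule basis_exists)
  have "finite K" using independent_span_bound[OF assms(4) K(2)] K(1) assms(3) by blast
  then show ?thesis using independent_span_bound[OF _ assms(1)] assms(2) K(3,4) by fastforce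
qed

end

section \<open>Lower semicontinuity of the rank\<close>

definition independent_family :: "nat \<Rightarrow> (nat \<Rightarrow> 'a \<Rightarrow> 'b::field) \<Rightarrow> bool" where
  "independent_family r v \<longleftrightarrow> (\<forall>a. (\<forall>x. (\<Sum>i<r. a i * v i x) = 0) \<longrightarrow> (\<forall>i<r. a i = 0))"

text \<open>Gaussian elimination of the last member at a point s where it does not vanish.\<close>
lemma independent_family_Suc_iff:
  assumes s: "v r s \<noteq> 0"
  shows "independent_family (Suc r) v \<longleftrightarrow>
    independent_family r (\<lambda>i x. v i x - v i s / v r s * v r x)"
proof -
  have elim: "(\<Sum>i<r. a i * (v i x - v i s / v r s * v r x)) =
      (\<Sum>i<r. a i * v i x) - (\<Sum>i<r. a i * v i s) / v r s * v r x" for a x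
    by (simp add: right_diff_distrib sum_subtractf sum_distrib_right sum_divide_distrib mult.assoc)
  show ?thesis
  proof
    assume ind: "independent_family (Suc r) v"
    show "independent_family r (\<lambda>i x. v i x - v i s / v r s * v r x)"
      unfolding independent_family_def
    proof (intro allI impI)
      fix a i assume a: "\<forall>x. (\<Sum>i<r. a i * (v i x - v i s / v r s * v r x)) = 0" and i: "i < r"
      define b where "b j = (if j < r then a j else - (\<Sum>i<r. a i * v i s) / v r s)" for j
      have "(\<Sum>i<Suc r. b i * v i x) = (\<Sum>i<r. a i * (v i x - v i s / v r s * v r x))" for x
        unfolding elim by (simp add: b_def)
      then have "\<forall>x. (\<Sum>i<Suc r. b i * v i x) = 0" using a by simp
      then have "b i = 0" using ind i unfolding independent_family_def by auto
      then show "a i = 0" using i by (simp add: b_def)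
    qed
  next
    assume ind: "independent_family r (\<lambda>i x. v i x - v i s / v r s * v r x)"
    show "independent_family (Suc r) v"
      unfolding independent_family_def
    proof (intro allI impI)
      fix a j assume a: "\<forall>x. (\<Sum>i<Suc r. a i * v i x) = 0" and j: "j < Suc r"
      have a_r: "a r = - (\<Sum>i<r. a i * v i s) / v r s"
        using a[rule_format, of s] s by (simp add: field_simps add_eq_0_iff2)
      have "(\<Sum>i<r. a i * (v i x - v i s / v r s * v r x)) = (\<Sum>i<Suc r. a i * v i x)" for x
        unfolding elim by (simp add: a_r)
      then have "\<forall>x. (\<Sum>i<r. a i * (v i x - v i s / v r s * v r x)) = 0" using a by simp
      then have "\<forall>i<r. a i = 0" using ind unfolding independent_family_def by blast
      then show "a j = 0" using a_r j less_Suc_eq by auto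
    qed
  qed
qed

lemma eventually_independent_family:
  fixes v :: "'t \<Rightarrow> nat \<Rightarrow> 'a \<Rightarrow> 'b::real_normed_field"
  assumes "independent_family r v0" and "\<And>i x. i < r \<Longrightarrow> ((\<lambda>t. v t i x) \<longlongrightarrow> v0 i x) F"
  shows "eventually (\<lambda>t. independent_family r (v t)) F"
  using assms
proof (induction r arbitrary: v v0)
  case 0
  then show ?case by (simp add: independent_family_def)
next
  case (Suc r)
  have "\<exists>s. v0 r s \<noteq> 0"
  proof (rule ccontr)
    assume "\<nexists>s. v0 r s \<noteq> 0"
    then have "\<forall>x. (\<Sum>i<Suc r. (if i = r then 1 else 0) * v0 i x) = 0" by simp
    then show False using Suc.prems(1) unfolding independent_family_def by fastforce
  qed
  then obtain s where s: "v0 r s \<noteq> 0" by blast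
  have lim_r: "((\<lambda>t. v t r x) \<longlongrightarrow> v0 r x) F" for x using Suc.prems(2) by simp
  have "eventually (\<lambda>t. independent_family r (\<lambda>i x. v t i x - v t i s / v t r s * v t r x)) F"
  proof (rule Suc.IH)
    show "independent_family r (\<lambda>i x. v0 i x - v0 i s / v0 r s * v0 r x)"
      using Suc.prems(1) independent_family_Suc_iff[of v0 r s, OF s] by blast
    show "((\<lambda>t. v t i x - v t i s / v t r s * v t r x) \<longlongrightarrow> v0 i x - v0 i s / v0 r s * v0 r x) F"
      if "i < r" for i x
      using that Suc.prems(2) lim_r s by (intro tendsto_intros) auto
  qed
  moreover have "eventually (\<lambda>t. v t r s \<noteq> 0) F"
    using tendsto_imp_eventually_ne[OF lim_r s] .
  ultimately show ?case
  proof eventually_elim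
    case (elim t)
    then show ?case using independent_family_Suc_iff[of "v t" r s] by simp
  qed
qed

lemma independent_family_inj_on:
  fixes v :: "nat \<Rightarrow> 'a \<Rightarrow> 'b::field"
  assumes ind: "independent_family r v"
  shows "inj_on v {..<r}"
proof (rule inj_onI, rule ccontr)
  fix i j assume i: "i \<in> {..<r}" and j: "j \<in> {..<r}" and eq: "v i = v j" and "i \<noteq> j"
  define a where "a l = (if l = i then 1 else if l = j then -1 else 0 :: 'b)" for l
  have "(\<Sum>l<r. a l * v l x) = (\<Sum>l\<in>{i, j}. a l * v l x)" for x
    by (rule sum.mono_neutral_right) (use i j in \<open>auto simp: a_def\<close>)
  then have "\<forall>x. (\<Sum>l<r. a l * v l x) = 0" using eq \<open>i \<noteq> j\<close> by (simp add: a_def)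
  then have "a i = 0" using ind i unfolding independent_family_def by blast
  then show False by (simp add: a_def)
qed

lemma independent_family_iff_independent:
  fixes v :: "nat \<Rightarrow> 'a \<Rightarrow> real"
  shows "independent_family r v \<longleftrightarrow> inj_on v {..<r} \<and> fun_space.independent (v ` {..<r})"
proof
  assume ind: "independent_family r v"
  then have inj: "inj_on v {..<r}" by (rule independent_family_inj_on)
  moreover have "fun_space.independent (v ` {..<r})"
  proof (rule fun_space.independent_if_scalars_zero)
    fix f u assume sum0: "(\<Sum>u\<in>v ` {..<r}. fun_scale (f u) u) = 0" and u: "u \<in> v ` {..<r}"
    have "(\<Sum>i<r. f (v i) * v i x) = 0" for x
      using fun_cong[OF sum0, of x] by (simp add: sum.reindex[OF inj] sum_fun_apply)
    then have "\<forall>i<r. f (v i) = 0"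
      using ind[unfolded independent_family_def, THEN spec, of "\<lambda>i. f (v i)"] by blast
    then show "f u = 0" using u by auto
  qed simp
  ultimately show "inj_on v {..<r} \<and> fun_space.independent (v ` {..<r})" ..
next
  assume "inj_on v {..<r} \<and> fun_space.independent (v ` {..<r})"
  then have inj: "inj_on v {..<r}" and ind: "fun_space.independent (v ` {..<r})" by blast+
  show "independent_family r v"
    unfolding independent_family_def
  proof (intro allI impI)
    fix a i assume sum0: "\<forall>x. (\<Sum>i<r. a i * v i x) = 0" and i: "i < r"
    define b where "b u = a (inv_into {..<r} v u)" for u
    have "(\<Sum>u\<in>v ` {..<r}. fun_scale (b u) u) = 0"
      using sum0 inj by (simp add: sum.reindex b_def fun_eq_iff sum_fun_apply)
    then have "b (v i) = 0" using fun_space.independentD[OF ind] i by blast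
    then show "a i = 0" using inj i by (simp add: b_def)
  qed
qed

lemma eventually_dim_image_ge:
  fixes L :: "'t \<Rightarrow> ('c \<Rightarrow> real) \<Rightarrow> 'a \<Rightarrow> real"
  assumes C: "C \<subseteq> fun_space.span B" "finite B"
    and lin: "\<And>t. module_hom fun_scale fun_scale (L t)" "module_hom fun_scale fun_scale L0"
    and lim: "\<And>w x. w \<in> C \<Longrightarrow> ((\<lambda>t. L t w x) \<longlongrightarrow> L0 w x) F"
  shows "eventually (\<lambda>t. fun_space.dim (L0 ` C) \<le> fun_space.dim (L t ` C)) F"
proof -
  have span_image: "M ` C \<subseteq> fun_space.span (M ` B)" if "module_hom fun_scale fun_scale M" for M
    using module_hom.spans_image[OF that C(1)] .
  obtain K where K: "K \<subseteq> L0 ` C" "fun_space.independent K" "card K = fun_space.dim (L0 ` C)"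
    "L0 ` C \<subseteq> fun_space.span K"
    by (rule fun_space.basis_exists)
  have "K \<subseteq> fun_space.span (L0 ` B)" using K(1) span_image[OF lin(2)] by (rule order_trans)
  then have "finite K"
    using fun_space.independent_span_bound[OF finite_imageI[OF C(2)] K(2)] by simp
  then obtain h where "bij_betw h {0..<card K} K"
    using ex_bij_betw_nat_finite by blast
  then have h: "bij_betw h {..<card K} K" by (simp only: atLeast0LessThan)
  have "\<forall>i\<in>{..<card K}. \<exists>w. w \<in> C \<and> L0 w = h i"
  proof
    fix i assume "i \<in> {..<card K}"
    then have "h i \<in> L0 ` C" using h K(1) bij_betwE by blast
    then show "\<exists>w. w \<in> C \<and> L0 w = h i" by auto
  qed
  from bchoice[OF this] obtain w where w: "\<forall>i\<in>{..<card K}. w i \<in> C \<and> L0 (w i) = h i"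
    by blast
  have "independent_family (card K) (\<lambda>i. L0 (w i))"
  proof -
    have "inj_on (\<lambda>i. L0 (w i)) {..<card K}" "(\<lambda>i. L0 (w i)) ` {..<card K} = K"
      using h w unfolding bij_betw_def inj_on_def by auto
    then show ?thesis using K(2) by (simp add: independent_family_iff_independent)
  qed
  moreover have "((\<lambda>t. L t (w i) x) \<longlongrightarrow> L0 (w i) x) F" if "i < card K" for i x
    using lim w that by blast
  ultimately have "eventually (\<lambda>t. independent_family (card K) (\<lambda>i. L t (w i))) F"
    by (rule eventually_independent_family)
  then show ?thesis
  proof (rule eventually_mono)
    fix t assume "independent_family (card K) (\<lambda>i. L t (w i))"
    then have inj: "inj_on (\<lambda>i. L t (w i)) {..<card K}"
      and ind: "fun_space.independent ((\<lambda>i. L t (w i)) ` {..<card K})"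
      using independent_family_iff_independent by blast+
    have "(\<lambda>i. L t (w i)) ` {..<card K} \<subseteq> L t ` C" using w by blast
    then have "card ((\<lambda>i. L t (w i)) ` {..<card K}) \<le> fun_space.dim (L t ` C)"
      using fun_space.card_le_dim_finitely_spanned[OF ind _ span_image[OF lin(1)] finite_imageI[OF C(2)]]
      by blast
    then show "fun_space.dim (L0 ` C) \<le> fun_space.dim (L t ` C)"
      using K(3) card_image[OF inj] by simp
  qed
qed

section \<open>Cochains and Betti numbers\<close>

lemma in_span_indicators:
  assumes "finite S" and "\<And>x. x \<notin> S \<Longrightarrow> f x = 0"
  shows "f \<in> fun_space.span ((\<lambda>y. indicator {y}) ` S)"
proof -
  have "f = (\<Sum>y\<in>S. fun_scale (f y) (indicator {y}))"
  proof
    fix x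
    show "f x = (\<Sum>y\<in>S. fun_scale (f y) (indicator {y})) x"
      using assms by (cases "x \<in> S") (simp_all add: sum_fun_apply indicator_def)
  qed
  also have "\<dots> \<in> fun_space.span ((\<lambda>y. indicator {y}) ` S)"
    by (intro fun_space.span_sum fun_space.span_scale fun_space.span_base) auto
  finally show ?thesis .
qed

definition tuples :: "nat \<Rightarrow> 'a list set" where
  "tuples n = {xs. length xs = n}"

lemma finite_tuples: "finite (tuples n :: 'a::finite list set)"
  using finite_lists_length_eq[of "UNIV :: 'a set" n] by (simp add: tuples_def)

lemma sum_tuples_Suc:
  "(\<Sum>ys\<in>tuples (Suc n). f ys) = (\<Sum>y\<in>(UNIV :: 'a::finite set). \<Sum>ys\<in>tuples n. f (y # ys))"
proof -
  have tuples_Suc: "tuples (Suc n) = (\<lambda>(y, ys). y # ys) ` (UNIV \<times> tuples n)"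
    by (auto simp: tuples_def image_iff length_Suc_conv)
  have "inj_on (\<lambda>(y, ys). y # ys) (UNIV \<times> tuples n :: ('a \<times> 'a list) set)"
    by (auto simp: inj_on_def)
  then show ?thesis
    by (simp add: tuples_Suc sum.reindex sum.cartesian_product split_def)
qed

lemma sum_tuples_prod:
  fixes f :: "nat \<Rightarrow> 'a::finite \<Rightarrow> 'b::comm_semiring_1"
  shows "(\<Sum>ys\<in>tuples n. \<Prod>l<n. f l (ys ! l)) = (\<Prod>l<n. \<Sum>y\<in>UNIV. f l y)"
proof (induction n arbitrary: f)
  case 0
  have "tuples 0 = {[] :: 'a list}" by (auto simp: tuples_def)
  then show ?case by simp
next
  case (Suc n)
  have "(\<Sum>ys\<in>tuples (Suc n). \<Prod>l<Suc n. f l (ys ! l))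
      = (\<Sum>y\<in>UNIV. f 0 y * (\<Sum>ys\<in>tuples n. \<Prod>l<n. f (Suc l) (ys ! l)))"
    by (simp add: sum_tuples_Suc prod.lessThan_Suc_shift sum_distrib_left del: prod.lessThan_Suc)
  also have "\<dots> = (\<Sum>y\<in>UNIV. f 0 y) * (\<Prod>l<n. \<Sum>y\<in>UNIV. f (Suc l) y)"
    using Suc.IH[of "\<lambda>l. f (Suc l)"] by (simp add: sum_distrib_right)
  also have "\<dots> = (\<Prod>l<Suc n. \<Sum>y\<in>UNIV. f l y)"
    by (simp add: prod.lessThan_Suc_shift del: prod.lessThan_Suc)
  finally show ?case .
qed

lemma cochains_subset_span:
  "cochains q \<subseteq> fun_space.span ((\<lambda>ys. indicator {ys}) ` tuples q :: ('n::finite list \<Rightarrow> real) set)"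
  using in_span_indicators[OF finite_tuples] by (auto simp: cochains_def tuples_def)

lemma subspace_cochains: "fun_space.subspace (cochains q)"
  unfolding fun_space.subspace_def cochains_def by (auto simp: zero_fun_def)

lemma linear_ce_diff: "module_hom fun_scale fun_scale (ce_diff c)"
  unfolding module_hom_iff module_iff_vector_space
  by (auto simp: fun_space.vector_space_axioms fun_eq_iff ce_diff_def sum.distrib distrib_left
      sum_distrib_left mult_ac)

lemma betti_eq_ranks:
  fixes c :: "'n::finite lie_str"
  assumes "1 \<le> p"
  shows "betti c p = fdim (cochains p :: ('n list \<Rightarrow> real) set)
    - fdim (ce_diff c ` cochains p) - fdim (ce_diff c ` cochains (p - 1))"
proof -
  have "cocycles c p = {\<omega> \<in> cochains p. ce_diff c \<omega> = 0}"
    unfolding cocycles_def by (simp add: zero_fun_def)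
  then have "fdim (cocycles c p) + fdim (ce_diff c ` cochains p) = fdim (cochains p :: ('n list \<Rightarrow> real) set)"
    using fun_space.dim_kernel_add_dim_image[OF subspace_cochains cochains_subset_span
        finite_imageI[OF finite_tuples] linear_ce_diff] by simp
  moreover have "coboundaries c p = ce_diff c ` cochains (p - 1)"
    using assms by (simp add: coboundaries_def)
  ultimately show ?thesis unfolding betti_def by (simp add: diff_diff_left)
qed

lemma eventually_betti_le:
  fixes c :: "'t \<Rightarrow> 'n::finite lie_str"
  assumes lim: "\<And>i j k. ((\<lambda>t. c t i j k) \<longlongrightarrow> c0 i j k) F" and p: "1 \<le> p"
  shows "eventually (\<lambda>t. betti (c t) p \<le> betti c0 p) F"
proof -
  have "eventually (\<lambda>t. fdim (ce_diff c0 ` cochains q) \<le> fdim (ce_diff (c t) ` cochains q)) F" for q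
  proof (rule eventually_dim_image_ge[OF cochains_subset_span finite_imageI[OF finite_tuples]
        linear_ce_diff linear_ce_diff])
    show "((\<lambda>t. ce_diff (c t) \<omega> xs) \<longlongrightarrow> ce_diff c0 \<omega> xs) F" for \<omega> xs
      unfolding ce_diff_def by (intro tendsto_intros lim)
  qed
  from eventually_conj[OF this[of p] this[of "p - 1"]] show ?thesis
    by eventually_elim (unfold betti_eq_ranks[OF p], arith)
qed

section \<open>Invariance of Betti numbers under isomorphism\<close>

lemma sum_tuples_permute:
  assumes \<sigma>: "distinct \<sigma>" "set \<sigma> = {..<n}"
  shows "(\<Sum>ys\<in>(tuples n :: 'a::finite list set). f (map ((!) ys) \<sigma>)) = (\<Sum>ys\<in>tuples n. f ys)"
proof -
  have len: "length \<sigma> = n" using distinct_card[OF \<sigma>(1)] \<sigma>(2) by simp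
  have inj: "inj_on (\<lambda>ys. map ((!) ys) \<sigma>) (tuples n :: 'a list set)"
  proof (rule inj_onI)
    fix ys zs assume "ys \<in> tuples n" "zs \<in> tuples n" "map ((!) ys) \<sigma> = map ((!) zs) \<sigma>"
    then show "ys = zs" using \<sigma>(2) by (intro nth_equalityI) (auto simp: tuples_def map_eq_conv)
  qed
  have "(\<lambda>ys. map ((!) ys) \<sigma>) ` tuples n \<subseteq> (tuples n :: 'a list set)" using len by (auto simp: tuples_def)
  then have "(\<lambda>ys. map ((!) ys) \<sigma>) ` tuples n = (tuples n :: 'a list set)"
    by (rule endo_inj_surj[OF finite_tuples _ inj])
  then show ?thesis using sum.reindex[OF inj, of f] by simp
qed

definition tensor_coeff :: "('n \<Rightarrow> 'n \<Rightarrow> real) \<Rightarrow> 'n list \<Rightarrow> 'n list \<Rightarrow> real" where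
  "tensor_coeff A ys xs = (\<Prod>l<length xs. A (ys ! l) (xs ! l))"

lemma tensor_coeff_Cons: "tensor_coeff A (y # ys) (x # xs) = A y x * tensor_coeff A ys xs"
  by (simp add: tensor_coeff_def prod.lessThan_Suc_shift del: prod.lessThan_Suc)

lemma tensor_coeff_permute:
  assumes \<sigma>: "distinct \<sigma>" "set \<sigma> = {..<length xs}"
  shows "tensor_coeff A (map ((!) ys) \<sigma>) (map ((!) xs) \<sigma>) = tensor_coeff A ys xs"
proof -
  have len: "length \<sigma> = length xs" using distinct_card[OF \<sigma>(1)] \<sigma>(2) by simp
  then have inj: "inj_on ((!) \<sigma>) {..<length xs}" using inj_on_nth[OF \<sigma>(1)] by auto
  have im: "(!) \<sigma> ` {..<length xs} = {..<length xs}" using \<sigma>(2) len by (auto simp: set_conv_nth)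
  have "tensor_coeff A (map ((!) ys) \<sigma>) (map ((!) xs) \<sigma>) = (\<Prod>l<length xs. A (ys ! (\<sigma> ! l)) (xs ! (\<sigma> ! l)))"
    unfolding tensor_coeff_def using len by (intro prod.cong) auto
  also have "\<dots> = (\<Prod>m\<in>(!) \<sigma> ` {..<length xs}. A (ys ! m) (xs ! m))"
    by (simp add: prod.reindex[OF inj])
  also have "\<dots> = tensor_coeff A ys xs" unfolding im tensor_coeff_def ..
  finally show ?thesis .
qed

lemma swap_as_permute:
  assumes "i < length xs" "j < length xs"
  shows "xs[i := xs ! j, j := xs ! i] = map ((!) xs) ([0..<length xs][i := j, j := i])"
  using assms by (intro nth_equalityI) (auto simp: nth_list_update)

lemma swap_permutation:
  assumes "i < n" "j < n"
  shows "distinct ([0..<n][i := j, j := i])" "set ([0..<n][i := j, j := i]) = {..<n}"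
proof -
  have "[0..<n][i := j, j := i] = [0..<n][i := [0..<n] ! j, j := [0..<n] ! i]"
    using assms by simp
  then show "distinct ([0..<n][i := j, j := i])" "set ([0..<n][i := j, j := i]) = {..<n}"
    using assms by (simp_all only: distinct_swap set_swap length_upt) auto
qed

lemma list_comp_eq_map_filter: "[f x. x \<leftarrow> xs, P x] = map f (filter P xs)"
  by (induction xs) auto

lemma drop_two_as_permute:
  "xs ! i # xs ! j # drop_two xs i j = map ((!) xs) (i # j # filter (\<lambda>l. l \<noteq> i \<and> l \<noteq> j) [0..<length xs])"
  by (simp add: drop_two_def list_comp_eq_map_filter)

lemma pick_two_permutation:
  assumes "i < j" "j < n"
  shows "distinct (i # j # filter (\<lambda>l. l \<noteq> i \<and> l \<noteq> j) [0..<n])"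
    and "set (i # j # filter (\<lambda>l. l \<noteq> i \<and> l \<noteq> j) [0..<n]) = {..<n}"
  using assms by auto

lemma length_drop_two:
  assumes "i < j" "j < length xs"
  shows "length (drop_two xs i j) = length xs - 2"
proof -
  have "Suc (Suc (length (drop_two xs i j))) = length xs"
    using arg_cong[OF drop_two_as_permute[of xs i j], of length]
      distinct_card[OF pick_two_permutation(1)[OF assms]] pick_two_permutation(2)[OF assms]
    by simp
  then show ?thesis by simp
qed

text \<open>With the convention of lie_iso (A m i is the m-th coordinate of A e_i), pullback A \<omega>
  evaluated at (e_x1, ..., e_xp) is \<omega>(A e_x1, ..., A e_xp), expanded multilinearly.\<close>
definition pullback :: "('n::finite \<Rightarrow> 'n \<Rightarrow> real) \<Rightarrow> ('n list \<Rightarrow> real) \<Rightarrow> 'n list \<Rightarrow> real" where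
  "pullback A \<omega> xs = (\<Sum>ys\<in>tuples (length xs). tensor_coeff A ys xs * \<omega> ys)"

lemma linear_pullback: "module_hom fun_scale fun_scale (pullback A)"
  unfolding module_hom_iff module_iff_vector_space
  by (auto simp: fun_space.vector_space_axioms fun_eq_iff pullback_def sum.distrib distrib_left
      sum_distrib_left mult_ac)

lemma pullback_comp:
  fixes A B :: "'n::finite \<Rightarrow> 'n \<Rightarrow> real"
  shows "pullback B (pullback A \<omega>) = pullback (\<lambda>i j. \<Sum>k\<in>UNIV. A i k * B k j) \<omega>"
proof
  fix xs :: "'n list"
  define n where "n = length xs"
  have coeff: "(\<Sum>ys\<in>tuples n. tensor_coeff A zs ys * tensor_coeff B ys xs)
      = tensor_coeff (\<lambda>i j. \<Sum>k\<in>UNIV. A i k * B k j) zs xs" for zs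
  proof -
    have "(\<Sum>ys\<in>tuples n. tensor_coeff A zs ys * tensor_coeff B ys xs)
        = (\<Sum>ys\<in>tuples n. \<Prod>l<n. A (zs ! l) (ys ! l) * B (ys ! l) (xs ! l))"
      by (intro sum.cong) (auto simp: tensor_coeff_def tuples_def n_def prod.distrib)
    also have "\<dots> = tensor_coeff (\<lambda>i j. \<Sum>k\<in>UNIV. A i k * B k j) zs xs"
      using sum_tuples_prod[of "\<lambda>l y. A (zs ! l) y * B y (xs ! l)" n]
      by (simp add: tensor_coeff_def n_def)
    finally show ?thesis .
  qed
  have "pullback B (pullback A \<omega>) xs
      = (\<Sum>ys\<in>tuples n. tensor_coeff B ys xs * (\<Sum>zs\<in>tuples n. tensor_coeff A zs ys * \<omega> zs))"
    unfolding pullback_def n_def by (intro sum.cong) (auto simp: tuples_def)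
  also have "\<dots> = (\<Sum>ys\<in>tuples n. \<Sum>zs\<in>tuples n. tensor_coeff A zs ys * tensor_coeff B ys xs * \<omega> zs)"
    by (simp add: sum_distrib_left mult_ac)
  also have "\<dots> = (\<Sum>zs\<in>tuples n. \<Sum>ys\<in>tuples n. tensor_coeff A zs ys * tensor_coeff B ys xs * \<omega> zs)"
    by (rule sum.swap)
  also have "\<dots> = pullback (\<lambda>i j. \<Sum>k\<in>UNIV. A i k * B k j) \<omega> xs"
    by (simp add: pullback_def n_def coeff[symmetric] sum_distrib_right)
  finally show "pullback B (pullback A \<omega>) xs = pullback (\<lambda>i j. \<Sum>k\<in>UNIV. A i k * B k j) \<omega> xs" .
qed

lemma tensor_coeff_id:
  assumes "length zs = length xs"
  shows "tensor_coeff (\<lambda>i j. if i = j then 1 else 0) zs xs = (if zs = xs then 1 else 0)"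
proof (cases "zs = xs")
  case False
  then obtain l where "l < length xs" "zs ! l \<noteq> xs ! l" using assms nth_equalityI by metis
  then have "(\<Prod>l<length xs. if zs ! l = xs ! l then 1 else 0 :: real) = 0"
    by (intro prod_zero) auto
  then show ?thesis using False by (simp add: tensor_coeff_def)
qed (simp add: tensor_coeff_def)

lemma pullback_id:
  fixes \<omega> :: "'n::finite list \<Rightarrow> real"
  shows "pullback (\<lambda>i j. if i = j then 1 else 0) \<omega> = \<omega>"
proof
  fix xs :: "'n list"
  have "pullback (\<lambda>i j. if i = j then 1 else 0) \<omega> xs
      = (\<Sum>zs\<in>tuples (length xs). if zs = xs then \<omega> zs else 0)"
    unfolding pullback_def by (intro sum.cong) (auto simp: tuples_def tensor_coeff_id)
  also have "\<dots> = \<omega> xs" by (subst sum.delta[OF finite_tuples]) (simp add: tuples_def)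
  finally show "pullback (\<lambda>i j. if i = j then 1 else 0) \<omega> xs = \<omega> xs" .
qed

lemma pullback_cochains:
  fixes \<omega> :: "'n::finite list \<Rightarrow> real"
  assumes \<omega>: "\<omega> \<in> cochains q"
  shows "pullback A \<omega> \<in> cochains q"
  unfolding cochains_def
proof (intro CollectI conjI allI impI)
  fix xs :: "'n list"
  assume "length xs \<noteq> q"
  then show "pullback A \<omega> xs = 0"
    using \<omega> unfolding pullback_def cochains_def tuples_def by (intro sum.neutral) auto
next
  fix xs :: "'n list" and i j
  assume ij: "length xs = q \<and> i < j \<and> j < q"
  define \<sigma> where "\<sigma> = [0..<q][i := j, j := i]"
  have \<sigma>: "distinct \<sigma>" "set \<sigma> = {..<q}" using swap_permutation[of i q j] ij by (auto simp: \<sigma>_def)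
  have swap: "ys[i := ys ! j, j := ys ! i] = map ((!) ys) \<sigma>" if "length ys = q" for ys :: "'n list"
    using swap_as_permute[of i ys j] ij that by (simp add: \<sigma>_def)
  have "pullback A \<omega> (map ((!) xs) \<sigma>) = (\<Sum>ys\<in>tuples q. tensor_coeff A ys (map ((!) xs) \<sigma>) * \<omega> ys)"
    unfolding pullback_def using distinct_card[OF \<sigma>(1)] \<sigma>(2) by simp
  also have "\<dots> = (\<Sum>ys\<in>tuples q. tensor_coeff A (map ((!) ys) \<sigma>) (map ((!) xs) \<sigma>) * \<omega> (map ((!) ys) \<sigma>))"
    by (rule sum_tuples_permute[OF \<sigma>, symmetric])
  also have "\<dots> = (\<Sum>ys\<in>tuples q. - (tensor_coeff A ys xs * \<omega> ys))"
  proof (rule sum.cong[OF refl])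
    fix ys :: "'n list" assume "ys \<in> tuples q"
    then have ys: "length ys = q" by (simp add: tuples_def)
    have "\<omega> (ys[i := ys ! j, j := ys ! i]) = - \<omega> ys"
      using \<omega> ij ys unfolding cochains_def by auto
    then have "\<omega> (map ((!) ys) \<sigma>) = - \<omega> ys" by (simp only: swap[OF ys])
    then show "tensor_coeff A (map ((!) ys) \<sigma>) (map ((!) xs) \<sigma>) * \<omega> (map ((!) ys) \<sigma>) = - (tensor_coeff A ys xs * \<omega> ys)"
      using tensor_coeff_permute[of \<sigma> xs A ys] \<sigma> ij ys by simp
  qed
  also have "\<dots> = - pullback A \<omega> xs" unfolding pullback_def using ij by (simp add: sum_negf)
  finally show "pullback A \<omega> (xs[i := xs ! j, j := xs ! i]) = - pullback A \<omega> xs"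
    using swap ij by simp
qed

lemma pullback_sum:
  "pullback A (\<lambda>zs. \<Sum>k\<in>K. a k * f k zs) xs = (\<Sum>k\<in>K. a k * pullback A (f k) xs)"
proof -
  have "pullback A (\<lambda>zs. \<Sum>k\<in>K. a k * f k zs) xs
      = (\<Sum>zs\<in>tuples (length xs). \<Sum>k\<in>K. a k * (tensor_coeff A zs xs * f k zs))"
    unfolding pullback_def by (simp add: sum_distrib_left mult.left_commute)
  also have "\<dots> = (\<Sum>k\<in>K. \<Sum>zs\<in>tuples (length xs). a k * (tensor_coeff A zs xs * f k zs))"
    by (rule sum.swap)
  also have "\<dots> = (\<Sum>k\<in>K. a k * pullback A (f k) xs)"
    unfolding pullback_def by (simp add: sum_distrib_left)
  finally show ?thesis .
qed

lemma pullback_Cons: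
  fixes \<omega> :: "'n::finite list \<Rightarrow> real"
  shows "pullback A \<omega> (x # xs) = (\<Sum>y\<in>UNIV. A y x * pullback A (\<lambda>ys. \<omega> (y # ys)) xs)"
  unfolding pullback_def by (simp add: sum_tuples_Suc tensor_coeff_Cons sum_distrib_left mult.assoc)

lemma sum_tuples_pick_two:
  fixes A :: "'n::finite \<Rightarrow> 'n \<Rightarrow> real" and f :: "'n \<Rightarrow> 'n \<Rightarrow> 'n list \<Rightarrow> real"
  assumes ij: "i < j" "j < length xs"
  shows "(\<Sum>ys\<in>tuples (length xs). tensor_coeff A ys xs * f (ys ! i) (ys ! j) (drop_two ys i j))
    = (\<Sum>a\<in>UNIV. \<Sum>b\<in>UNIV. A a (xs ! i) * A b (xs ! j) * pullback A (f a b) (drop_two xs i j))"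
proof -
  define n where "n = length xs"
  define \<sigma> where "\<sigma> = i # j # filter (\<lambda>l. l \<noteq> i \<and> l \<noteq> j) [0..<n]"
  have \<sigma>: "distinct \<sigma>" "set \<sigma> = {..<n}"
    using pick_two_permutation[OF ij] by (auto simp: \<sigma>_def n_def)
  define dx where "dx = drop_two xs i j"
  have len_n: "n = Suc (Suc (length dx))" using length_drop_two[OF ij] ij by (simp add: dx_def n_def)
  have xs_\<sigma>: "map ((!) xs) \<sigma> = xs ! i # xs ! j # dx"
    using drop_two_as_permute[of xs i j] by (simp add: \<sigma>_def dx_def n_def)
  define H where "H zs = tensor_coeff A zs (map ((!) xs) \<sigma>) * f (zs ! 0) (zs ! 1) (drop 2 zs)" for zs
  have "(\<Sum>ys\<in>tuples n. tensor_coeff A ys xs * f (ys ! i) (ys ! j) (drop_two ys i j))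
      = (\<Sum>ys\<in>tuples n. H (map ((!) ys) \<sigma>))"
  proof (rule sum.cong[OF refl])
    fix ys :: "'n list" assume "ys \<in> tuples n"
    then have ys: "length ys = n" by (simp add: tuples_def)
    have "map ((!) ys) \<sigma> = ys ! i # ys ! j # drop_two ys i j"
      using drop_two_as_permute[of ys i j] by (simp add: \<sigma>_def ys)
    then show "tensor_coeff A ys xs * f (ys ! i) (ys ! j) (drop_two ys i j) = H (map ((!) ys) \<sigma>)"
      using tensor_coeff_permute[of \<sigma> xs A ys] \<sigma> ys by (simp add: H_def n_def)
  qed
  also have "\<dots> = (\<Sum>ys\<in>tuples n. H ys)" by (rule sum_tuples_permute[OF \<sigma>])
  also have "\<dots> = (\<Sum>a\<in>UNIV. \<Sum>b\<in>UNIV. \<Sum>zs\<in>tuples (length dx). H (a # b # zs))"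
    by (simp add: len_n sum_tuples_Suc)
  also have "\<dots> = (\<Sum>a\<in>UNIV. \<Sum>b\<in>UNIV. A a (xs ! i) * A b (xs ! j) * pullback A (f a b) dx)"
    by (simp add: H_def xs_\<sigma> tensor_coeff_Cons pullback_def sum_distrib_left mult_ac)
  finally show ?thesis by (simp add: n_def dx_def)
qed

text \<open>hom says A [e_i, e_j]_c = [A e_i, A e_j]_c'; the left-hand side is the (i, j) summand
  of the differential of the pulled-back cochain.\<close>
lemma pullback_bracket_term:
  fixes c c' :: "'n::finite lie_str" and \<omega> :: "'n list \<Rightarrow> real"
  assumes hom: "\<forall>i j m. (\<Sum>k\<in>UNIV. c i j k * A m k) = (\<Sum>k\<in>UNIV. \<Sum>l\<in>UNIV. A k i * A l j * c' k l m)"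
    and ij: "i < j" "j < length xs"
  shows "(\<Sum>k\<in>UNIV. c (xs ! i) (xs ! j) k * pullback A \<omega> (k # drop_two xs i j))
    = (\<Sum>ys\<in>tuples (length xs). tensor_coeff A ys xs *
         (\<Sum>k\<in>UNIV. c' (ys ! i) (ys ! j) k * \<omega> (k # drop_two ys i j)))"
proof -
  define X where "X a = A a (xs ! i)" for a
  define Y where "Y b = A b (xs ! j)" for b
  define dx where "dx = drop_two xs i j"
  define P where "P m = pullback A (\<lambda>zs. \<omega> (m # zs)) dx" for m
  have "(\<Sum>k\<in>UNIV. c (xs ! i) (xs ! j) k * pullback A \<omega> (k # dx))
      = (\<Sum>k\<in>UNIV. \<Sum>m\<in>UNIV. c (xs ! i) (xs ! j) k * A m k * P m)"
    by (simp add: pullback_Cons P_def sum_distrib_left mult.assoc)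
  also have "\<dots> = (\<Sum>m\<in>UNIV. \<Sum>k\<in>UNIV. c (xs ! i) (xs ! j) k * A m k * P m)"
    by (rule sum.swap)
  also have "\<dots> = (\<Sum>m\<in>UNIV. \<Sum>a\<in>UNIV. \<Sum>b\<in>UNIV. X a * Y b * c' a b m * P m)"
    by (simp add: hom X_def Y_def flip: sum_distrib_right)
  also have "\<dots> = (\<Sum>a\<in>UNIV. \<Sum>m\<in>UNIV. \<Sum>b\<in>UNIV. X a * Y b * c' a b m * P m)"
    by (rule sum.swap)
  also have "\<dots> = (\<Sum>a\<in>UNIV. \<Sum>b\<in>UNIV. \<Sum>m\<in>UNIV. X a * Y b * c' a b m * P m)"
    by (rule sum.cong[OF refl], rule sum.swap)
  also have "\<dots> = (\<Sum>a\<in>UNIV. \<Sum>b\<in>UNIV. X a * Y b *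
      pullback A (\<lambda>zs. \<Sum>k\<in>UNIV. c' a b k * \<omega> (k # zs)) dx)"
    by (simp add: pullback_sum P_def sum_distrib_left mult.assoc)
  also have "\<dots> = (\<Sum>ys\<in>tuples (length xs). tensor_coeff A ys xs *
         (\<Sum>k\<in>UNIV. c' (ys ! i) (ys ! j) k * \<omega> (k # drop_two ys i j)))"
    unfolding X_def Y_def dx_def by (rule sum_tuples_pick_two[OF ij, symmetric])
  finally show ?thesis by (simp add: dx_def)
qed

lemma ce_diff_pullback:
  fixes c c' :: "'n::finite lie_str" and \<omega> :: "'n list \<Rightarrow> real"
  assumes hom: "\<forall>i j m. (\<Sum>k\<in>UNIV. c i j k * A m k) = (\<Sum>k\<in>UNIV. \<Sum>l\<in>UNIV. A k i * A l j * c' k l m)"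
  shows "ce_diff c (pullback A \<omega>) = pullback A (ce_diff c' \<omega>)"
proof
  fix xs :: "'n list"
  define n where "n = length xs"
  define G where "G ys i j = (\<Sum>k\<in>UNIV. c' (ys ! i) (ys ! j) k * \<omega> (k # drop_two ys i j))" for ys i j
  have "pullback A (ce_diff c' \<omega>) xs
      = (\<Sum>ys\<in>tuples n. \<Sum>j<n. \<Sum>i<j. (-1) ^ (i + j) * (tensor_coeff A ys xs * G ys i j))"
    unfolding pullback_def ce_diff_def G_def n_def
    by (intro sum.cong refl) (simp add: tuples_def sum_distrib_left mult.left_commute)
  also have "\<dots> = (\<Sum>j<n. \<Sum>ys\<in>tuples n. \<Sum>i<j. (-1) ^ (i + j) * (tensor_coeff A ys xs * G ys i j))"
    by (rule sum.swap)
  also have "\<dots> = (\<Sum>j<n. \<Sum>i<j. \<Sum>ys\<in>tuples n. (-1) ^ (i + j) * (tensor_coeff A ys xs * G ys i j))"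
    by (rule sum.cong[OF refl], rule sum.swap)
  also have "\<dots> = (\<Sum>j<n. \<Sum>i<j. (-1) ^ (i + j) *
      (\<Sum>k\<in>UNIV. c (xs ! i) (xs ! j) k * pullback A \<omega> (k # drop_two xs i j)))"
    by (intro sum.cong refl)
      (simp add: pullback_bracket_term[OF hom] G_def n_def flip: sum_distrib_left)
  also have "\<dots> = ce_diff c (pullback A \<omega>) xs"
    unfolding ce_diff_def n_def ..
  finally show "ce_diff c (pullback A \<omega>) xs = pullback A (ce_diff c' \<omega>) xs" ..
qed

text \<open>The pullback along the isomorphism is a bijection of each cochain space intertwining
  the two differentials, so the differentials have the same rank.\<close>
lemma dim_image_ce_diff_iso:
  fixes c c' :: "'n::finite lie_str"
  assumes "lie_iso c c'"
  shows "fdim (ce_diff c ` cochains q) = fdim (ce_diff c' ` cochains q)"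
proof -
  obtain A B :: "'n \<Rightarrow> 'n \<Rightarrow> real" where
    AB: "\<forall>i j. (\<Sum>k\<in>UNIV. A i k * B k j) = (if i = j then 1 else 0)" and
    BA: "\<forall>i j. (\<Sum>k\<in>UNIV. B i k * A k j) = (if i = j then 1 else 0)" and
    hom: "\<forall>i j m. (\<Sum>k\<in>UNIV. c i j k * A m k) = (\<Sum>k\<in>UNIV. \<Sum>l\<in>UNIV. A k i * A l j * c' k l m)"
    using assms unfolding lie_iso_def by blast
  have BA_inv: "pullback B (pullback A \<omega>) = \<omega>" for \<omega> :: "'n list \<Rightarrow> real"
    using AB by (simp add: pullback_comp pullback_id)
  have AB_inv: "pullback A (pullback B \<omega>) = \<omega>" for \<omega> :: "'n list \<Rightarrow> real"
    using BA by (simp add: pullback_comp pullback_id)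
  have "pullback A ` cochains q \<subseteq> cochains q" using pullback_cochains by blast
  moreover have "\<omega> \<in> pullback A ` cochains q" if "\<omega> \<in> cochains q" for \<omega>
    using image_eqI[where f = "pullback A" and x = "pullback B \<omega>"] AB_inv pullback_cochains[OF that]
    by simp
  ultimately have "pullback A ` cochains q = cochains q" by blast
  then have "ce_diff c ` cochains q = ce_diff c ` pullback A ` cochains q" by simp
  also have "\<dots> = pullback A ` ce_diff c' ` cochains q"
    by (simp add: image_image ce_diff_pullback[OF hom])
  finally have "fdim (ce_diff c ` cochains q) = fdim (pullback A ` ce_diff c' ` cochains q)"
    by simp
  also have "\<dots> = fdim (ce_diff c' ` cochains q)"
    by (rule fun_space.dim_image_eq[OF linear_pullback inj_on_inverseI[of _ "pullback B"]])
      (rule BA_inv)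
  finally show ?thesis .
qed

lemma betti_iso:
  fixes c c' :: "'n::finite lie_str"
  assumes "lie_iso c c'" and "1 \<le> p"
  shows "betti c p = betti c' p"
  by (simp add: betti_eq_ranks[OF assms(2)] dim_image_ce_diff_iso[OF assms(1)])

theorem proposition4:
  fixes c :: "real \<Rightarrow> 'n::finite lie_str" and g :: "'n lie_str"
  assumes "is_deformation c"
    and "is_lie g"
    and "lie_iso (c 1) g"
    and "\<not> lie_iso (c 0) g"
    and "\<exists>i. coeff (poincare_poly (c 0) - poincare_poly g) i < 0"
  shows "\<not> plateau_type c"
proof
  assume plateau: "plateau_type c"
  obtain p where "coeff (poincare_poly (c 0) - poincare_poly g) p < 0" using assms(5) by blast
  then have p: "1 \<le> p" and less: "betti (c 0) p < betti g p"
    by (auto simp: poincare_poly_def coeff_sum coeff_monom split: if_splits)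
  have "((\<lambda>t. c t i j k) \<longlongrightarrow> c 0 i j k) (at_right 0)" for i j k
    using assms(1) unfolding is_deformation_def continuous_on_def
    by (metis at_within_Icc_at_right atLeastAtMost_iff order_refl zero_le_one zero_less_one)
  then have "eventually (\<lambda>t. betti (c t) p \<le> betti (c 0) p) (at_right 0)"
    by (rule eventually_betti_le[OF _ p])
  moreover have "eventually (\<lambda>t. t \<in> {0<..1}) (at_right (0::real))"
    unfolding eventually_at_right_field by (auto intro: exI[of _ 1])
  ultimately obtain t where t: "t \<in> {0<..1}" and "betti (c t) p \<le> betti (c 0) p"
    using eventually_happens'[OF trivial_limit_at_right_real] eventually_conj by blast
  moreover have "betti (c t) p = betti g p"
    using plateau t betti_iso[OF _ p] assms(3) unfolding plateau_type_def by metis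
  ultimately show False using less by simp
qed

end
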